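(* Fix $k\in\mathbb N$ and consider the atom–cavity coefficients on $\mathcal D=\mathcal H'\odot\mathcal D'$ described in the context. Then there exists $\varepsilon>0$ such that for every $u\in\mathcal D$ there are constants $c(\ell,u)\ge0$, $\ell\in\mathbb N$, with $\sum_{\ell=1}^\infty c(\ell,u)\varepsilon^\ell<\infty$ and $$\|X(1)X(2)\cdots X(\ell)u\|\le c(\ell,u)\sqrt{(\ell+m)!}$$ for every $\ell\in\mathbb N$ and every choice of $X(1),\dots,X(\ell)$ from $\{K^{(k)},K^{(k)*},L^{(k)}_i,L^{(k)*}_i,M^{(k)}_i,M^{(k)*}_i,N^{(k)}_{ij},N^{(k)*}_{ij}:1\le i,j\le n\}$ (adjoints taken formally on $\mathcal D$), where $m$ is the number of occurrences of $K^{(k)}$ or $K^{(k)*}$ among $X(1),\dots,X(\ell)$.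
   Context: $\mathcal H'$ is a separable complex Hilbert space, $\{\varphi_i\}_{i\in\mathbb Z_+}$ is the canonical basis of $\ell^2(\mathbb Z_+)$, and $b^\dagger\varphi_i=\sqrt{i+1}\varphi_{i+1}$, $b\varphi_i=\sqrt i\varphi_{i-1}$, $b^\dagger b\varphi_i=i\varphi_i$ on $\mathcal D'=\mathrm{span}\{\varphi_i\}$. $\mathcal H=\mathcal H'\otimes\ell^2(\mathbb Z_+)$ and $\mathcal D=\mathcal H'\odot\mathcal D'$ (algebraic tensor product). For $n\in\mathbb N$, $1\le i,j\le n$, the coefficients are $N^{(k)}_{ij}=S^{(k)}_{ij}$, $L^{(k)}_i=F^{(k)}_ib^\dagger+G^{(k)}_i$, $K^{(k)}=E^{(k)}_{11}b^\dagger b+E^{(k)}_{10}b^\dagger+E^{(k)}_{01}b+E^{(k)}_{00}$, where $E^{(k)}_{pq},F^{(k)}_i,G^{(k)}_i,S^{(k)}_{ij}$ are bounded operators on $\mathcal H'$, and these satisfy on $\mathcal D$ the Hudson–Parthasarathy relations $K^{(k)}+K^{(k)\dagger}=-\sum_iL^{(k)}_iL^{(k)\dagger}_i$, $\sum_jN^{(k)}_{mj}N^{(k)\dagger}_{\ell j}=\sum_jN^{(k)\dagger}_{jm}N^{(k)}_{j\ell}=\delta_{m\ell}$, with $M^{(k)}_i$ defined by $M^{(k)}_i=-\sum_jN^{(k)}_{ij}L^{(k)\dagger}_j$ (here $\dagger$ is the formal adjoint on $\mathcal D$, e.g. $(Xb^\dagger)^\dagger=X^*b$ for bounded $X$ on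 $\mathcal H'$). *)

theory Defs
  imports "HOL-Analysis.Analysis" "HOL-Library.Function_Algebras"
begin

class cvec = ab_group_add +
  fixes scaleC :: "complex \<Rightarrow> 'a \<Rightarrow> 'a"
  assumes scaleC_add_right: "scaleC a (x + y) = scaleC a x + scaleC a y"
    and scaleC_add_left: "scaleC (a + b) x = scaleC a x + scaleC b x"
    and scaleC_scaleC: "scaleC a (scaleC b x) = scaleC (a * b) x"
    and scaleC_one: "scaleC 1 x = x"

class cinner_space = cvec +
  fixes cinner :: "'a \<Rightarrow> 'a \<Rightarrow> complex"
  assumes cinner_commute: "cinner x y = cnj (cinner y x)"
    and cinner_add_right: "cinner x (y + z) = cinner x y + cinner x z"
    and cinner_scaleC_right: "cinner x (scaleC a y) = a * cinner x y"
    and cinner_Re_nonneg: "0 \<le> Re (cinner x x)"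
    and cinner_eq_zero_iff: "cinner x x = 0 \<longleftrightarrow> x = 0"

definition cnorm :: "'a::cinner_space \<Rightarrow> real" where
  "cnorm x = sqrt (Re (cinner x x))"

class chilbert = cinner_space +
  assumes cauchy_convergent:
    "(\<forall>e>0. \<exists>N. \<forall>m\<ge>N. \<forall>n\<ge>N. sqrt (Re (cinner (X m - X n) (X m - X n))) < e) \<Longrightarrow>
       \<exists>x. (\<lambda>n. sqrt (Re (cinner (X n - x) (X n - x)))) \<longlonglongrightarrow> 0"
    and separable: "\<exists>C. countable C \<and> (\<forall>x. \<forall>e>0. \<exists>d\<in>C. sqrt (Re (cinner (x - d) (x - d))) < e)"

definition bounded_cop :: "('a::cinner_space \<Rightarrow> 'a) \<Rightarrow> bool" where
  "bounded_cop A \<longleftrightarrow> (\<forall>x y. A (x + y) = A x + A y) \<and> (\<forall>a x. A (scaleC a x) = scaleC a (A x))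
     \<and> (\<exists>B. \<forall>x. cnorm (A x) \<le> B * cnorm x)"

definition is_adjoint :: "('a::cinner_space \<Rightarrow> 'a) \<Rightarrow> ('a \<Rightarrow> 'a) \<Rightarrow> bool" where
  "is_adjoint A As \<longleftrightarrow> (\<forall>x y. cinner (A x) y = cinner x (As y))"

text \<open>A vector u of H' \<otimes> l2(Z+) is represented by its components u i \<in> H' along phi_i;
  the elements of the algebraic tensor product D are exactly the finitely supported ones.\<close>
definition Dspace :: "(nat \<Rightarrow> 'a::cinner_space) set" where
  "Dspace = {u. finite {i. u i \<noteq> 0}}"

definition Hnorm :: "(nat \<Rightarrow> 'a::cinner_space) \<Rightarrow> real" where
  "Hnorm u = sqrt (\<Sum>i\<in>{i. u i \<noteq> 0}. (cnorm (u i))\<^sup>2)"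

text \<open>X \<otimes> 1 for an operator X on H'.\<close>
definition lift :: "('a::cinner_space \<Rightarrow> 'a) \<Rightarrow> (nat \<Rightarrow> 'a) \<Rightarrow> (nat \<Rightarrow> 'a)" where
  "lift A u = (\<lambda>i. A (u i))"

text \<open>1 \<otimes> b^dagger, b^dagger phi_i = sqrt(i+1) phi_(i+1).\<close>
definition bdag :: "(nat \<Rightarrow> 'a::cinner_space) \<Rightarrow> (nat \<Rightarrow> 'a)" where
  "bdag u = (\<lambda>i. if i = 0 then 0 else scaleC (complex_of_real (sqrt (real i))) (u (i - 1)))"

text \<open>1 \<otimes> b, b phi_i = sqrt i phi_(i-1).\<close>
definition bann :: "(nat \<Rightarrow> 'a::cinner_space) \<Rightarrow> (nat \<Rightarrow> 'a)" where
  "bann u = (\<lambda>i. scaleC (complex_of_real (sqrt (real (Suc i)))) (u (Suc i)))"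

text \<open>1 \<otimes> b^dagger b, b^dagger b phi_i = i phi_i.\<close>
definition numop :: "(nat \<Rightarrow> 'a::cinner_space) \<Rightarrow> (nat \<Rightarrow> 'a)" where
  "numop u = (\<lambda>i. scaleC (of_nat i) (u i))"

text \<open>K = E11 b^dagger b + E10 b^dagger + E01 b + E00.  Its formal adjoint is
  Kop E11* E01* E10* E00*.\<close>
definition Kop :: "('a::cinner_space \<Rightarrow> 'a) \<Rightarrow> ('a \<Rightarrow> 'a) \<Rightarrow> ('a \<Rightarrow> 'a) \<Rightarrow> ('a \<Rightarrow> 'a)
    \<Rightarrow> (nat \<Rightarrow> 'a) \<Rightarrow> (nat \<Rightarrow> 'a)" where
  "Kop E11 E10 E01 E00 u = lift E11 (numop u) + lift E10 (bdag u) + lift E01 (bann u) + lift E00 u"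

definition Lop :: "('a::cinner_space \<Rightarrow> 'a) \<Rightarrow> ('a \<Rightarrow> 'a) \<Rightarrow> (nat \<Rightarrow> 'a) \<Rightarrow> (nat \<Rightarrow> 'a)" where
  "Lop F G u = lift F (bdag u) + lift G u"

definition Ldagop :: "('a::cinner_space \<Rightarrow> 'a) \<Rightarrow> ('a \<Rightarrow> 'a) \<Rightarrow> (nat \<Rightarrow> 'a) \<Rightarrow> (nat \<Rightarrow> 'a)" where
  "Ldagop Fs Gs u = lift Fs (bann u) + lift Gs u"

datatype oplabel = OK | OKs | OL nat | OLs nat | OM nat | OMs nat | ON nat nat | ONs nat nat

fun valid_label :: "nat \<Rightarrow> oplabel \<Rightarrow> bool" where
  "valid_label n OK = True"
| "valid_label n OKs = True"
| "valid_label n (OL i) = (1 \<le> i \<and> i \<le> n)"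
| "valid_label n (OLs i) = (1 \<le> i \<and> i \<le> n)"
| "valid_label n (OM i) = (1 \<le> i \<and> i \<le> n)"
| "valid_label n (OMs i) = (1 \<le> i \<and> i \<le> n)"
| "valid_label n (ON i j) = (1 \<le> i \<and> i \<le> n \<and> 1 \<le> j \<and> j \<le> n)"
| "valid_label n (ONs i j) = (1 \<le> i \<and> i \<le> n \<and> 1 \<le> j \<and> j \<le> n)"

fun is_K_label :: "oplabel \<Rightarrow> bool" where
  "is_K_label OK = True"
| "is_K_label OKs = True"
| "is_K_label _ = False"

fun opval :: "nat \<Rightarrow> ('a::cinner_space \<Rightarrow> 'a) \<Rightarrow> ('a \<Rightarrow> 'a) \<Rightarrow> ('a \<Rightarrow> 'a) \<Rightarrow> ('a \<Rightarrow> 'a)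
    \<Rightarrow> ('a \<Rightarrow> 'a) \<Rightarrow> ('a \<Rightarrow> 'a) \<Rightarrow> ('a \<Rightarrow> 'a) \<Rightarrow> ('a \<Rightarrow> 'a)
    \<Rightarrow> (nat \<Rightarrow> 'a \<Rightarrow> 'a) \<Rightarrow> (nat \<Rightarrow> 'a \<Rightarrow> 'a) \<Rightarrow> (nat \<Rightarrow> 'a \<Rightarrow> 'a) \<Rightarrow> (nat \<Rightarrow> 'a \<Rightarrow> 'a)
    \<Rightarrow> (nat \<Rightarrow> nat \<Rightarrow> 'a \<Rightarrow> 'a) \<Rightarrow> (nat \<Rightarrow> nat \<Rightarrow> 'a \<Rightarrow> 'a)
    \<Rightarrow> oplabel \<Rightarrow> (nat \<Rightarrow> 'a) \<Rightarrow> (nat \<Rightarrow> 'a)" where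
  "opval n E11 E10 E01 E00 E11s E10s E01s E00s F G Fs Gs S Ss OK = Kop E11 E10 E01 E00"
| "opval n E11 E10 E01 E00 E11s E10s E01s E00s F G Fs Gs S Ss OKs = Kop E11s E01s E10s E00s"
| "opval n E11 E10 E01 E00 E11s E10s E01s E00s F G Fs Gs S Ss (OL i) = Lop (F i) (G i)"
| "opval n E11 E10 E01 E00 E11s E10s E01s E00s F G Fs Gs S Ss (OLs i) = Ldagop (Fs i) (Gs i)"
| "opval n E11 E10 E01 E00 E11s E10s E01s E00s F G Fs Gs S Ss (OM i) =
     (\<lambda>u. - (\<Sum>j\<in>{1..n}. lift (S i j) (Ldagop (Fs j) (Gs j) u)))"
| "opval n E11 E10 E01 E00 E11s E10s E01s E00s F G Fs Gs S Ss (OMs i) =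
     (\<lambda>u. - (\<Sum>j\<in>{1..n}. Lop (F j) (G j) (lift (Ss i j) u)))"
| "opval n E11 E10 E01 E00 E11s E10s E01s E00s F G Fs Gs S Ss (ON i j) = lift (S i j)"
| "opval n E11 E10 E01 E00 E11s E10s E01s E00s F G Fs Gs S Ss (ONs i j) = lift (Ss i j)"

end

theory Submission
  imports Defs
begin

text \<open>Each coefficient is built from bounded operators on \<open>H'\<close> and at most one factor
  \<open>b\<close>, \<open>b\<^sup>\<dagger>\<close> or \<open>b\<^sup>\<dagger>b\<close> per summand. On vectors supported on the first \<open>q\<close> number
  states such an operator enlarges the support by at most one state, and it multiplies the
  squared norm by at most \<open>D (q + 1)\<close>, or by \<open>D (q + 1)\<^sup>2\<close> for \<open>K\<close> and \<open>K\<^sup>*\<close> because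
  of \<open>b\<^sup>\<dagger>b\<close>, with one constant \<open>D\<close>. For \<open>u\<close> supported on \<open>N\<close> states, a product of
  \<open>l\<close> coefficients of which \<open>m\<close> are \<open>K\<close> or \<open>K\<^sup>*\<close> therefore has squared norm at most
  \<open>D\<^sup>l (N + l + m)! \<parallel>u\<parallel>\<^sup>2\<close>, and \<open>(N + l + m)! \<le> 2\<^sup>N 4\<^sup>l N! (l + m)!\<close> yields
  \<open>c(l, u) = C(u) (4 D)\<^bsup>l/2\<^esup>\<close>, summable against \<open>\<epsilon>\<^sup>l\<close> for \<open>\<epsilon> = 1 / (2 \<surd>(4 D))\<close>.
  Only the boundedness of the coefficients enters.\<close>

section \<open>Complex inner product spaces\<close>

lemma scaleC_zero_right [simp]: "scaleC a (0::'a::cvec) = 0"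
  using scaleC_add_right[of a "0::'a" 0] by simp

lemma cinner_add_left: "cinner (x + y) (z::'a::cinner_space) = cinner x z + cinner y z"
  by (metis cinner_commute cinner_add_right complex_cnj_add)

lemma cinner_zero_left [simp]: "cinner 0 (x::'a::cinner_space) = 0"
  using cinner_add_left[of 0 0 x] by simp

lemma cinner_zero_right [simp]: "cinner (x::'a::cinner_space) 0 = 0"
  using cinner_add_right[of x 0 0] by simp

lemma cinner_minus_left: "cinner (- x) (y::'a::cinner_space) = - cinner x y"
  using cinner_add_left[of x "- x" y] by (simp add: eq_neg_iff_add_eq_0 add.commute)

lemma cinner_minus_right: "cinner (x::'a::cinner_space) (- y) = - cinner x y"
  using cinner_add_right[of x y "- y"] by (simp add: eq_neg_iff_add_eq_0 add.commute)

lemma cinner_diff_left: "cinner (x - y) (z::'a::cinner_space) = cinner x z - cinner y z"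
  using cinner_add_left[of x "- y" z] by (simp add: cinner_minus_left)

lemma cinner_diff_right: "cinner z (x - (y::'a::cinner_space)) = cinner z x - cinner z y"
  using cinner_add_right[of z x "- y"] by (simp add: cinner_minus_right)

lemma cinner_scaleC_left: "cinner (scaleC a x) (y::'a::cinner_space) = cnj a * cinner x y"
  by (metis cinner_commute cinner_scaleC_right complex_cnj_mult)

lemma Re_cinner_commute: "Re (cinner x (y::'a::cinner_space)) = Re (cinner y x)"
  by (subst cinner_commute) simp

lemma cnorm_power2: "cnorm (x::'a::cinner_space) ^ 2 = Re (cinner x x)"
  unfolding cnorm_def using cinner_Re_nonneg[of x] by simp

lemma cnorm_nonneg: "0 \<le> cnorm x"
  unfolding cnorm_def using cinner_Re_nonneg[of x] by simp

lemma cnorm_zero [simp]: "cnorm (0::'a::cinner_space) = 0"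
  unfolding cnorm_def by simp

lemma cnorm_minus [simp]: "cnorm (- (x::'a::cinner_space)) = cnorm x"
  unfolding cnorm_def by (simp add: cinner_minus_left cinner_minus_right)

lemma cnorm_eq_zero_iff: "cnorm (x::'a::cinner_space) = 0 \<longleftrightarrow> x = 0"
proof
  assume "cnorm x = 0"
  then have "Re (cinner x x) = 0"
    using cinner_Re_nonneg[of x] unfolding cnorm_def by simp
  moreover have "Im (cinner x x) = 0"
    using arg_cong[OF cinner_commute[of x x], of Im] by simp
  ultimately have "cinner x x = 0"
    by (simp add: complex_eqI)
  then show "x = 0"
    using cinner_eq_zero_iff by blast
qed simp

lemma cnorm_scaleC_of_real_power2:
  "cnorm (scaleC (complex_of_real r) (x::'a::cinner_space)) ^ 2 = r\<^sup>2 * cnorm x ^ 2"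
  unfolding cnorm_power2 by (simp add: cinner_scaleC_left cinner_scaleC_right power2_eq_square)

lemma cnorm_add_power2_le: "cnorm ((x::'a::cinner_space) + y) ^ 2 \<le> 2 * cnorm x ^ 2 + 2 * cnorm y ^ 2"
  using cinner_Re_nonneg[of "x - y"] unfolding cnorm_power2
  by (simp add: cinner_add_left cinner_add_right cinner_diff_left cinner_diff_right
      Re_cinner_commute[of y x])

lemma two_Re_cinner_le: "2 * t * Re (cinner a (y::'a::cinner_space)) \<le> t\<^sup>2 * cnorm a ^ 2 + cnorm y ^ 2"
  using cinner_Re_nonneg[of "scaleC (complex_of_real t) a - y"] unfolding cnorm_power2
  by (simp add: cinner_diff_left cinner_diff_right
      cinner_scaleC_left cinner_scaleC_right Re_cinner_commute[of y a] power2_eq_square algebra_simps)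

section \<open>Operator bounds\<close>

definition op_bound :: "('a::cinner_space \<Rightarrow> 'a) \<Rightarrow> real \<Rightarrow> bool" where
  "op_bound A B \<longleftrightarrow> 1 \<le> B \<and> (\<forall>x. cnorm (A x) \<le> B * cnorm x)"

lemma op_bound_ge_1: "op_bound A B \<Longrightarrow> 1 \<le> B"
  unfolding op_bound_def by simp

lemma op_bound_mono: "op_bound A B \<Longrightarrow> B \<le> B' \<Longrightarrow> op_bound A B'"
  unfolding op_bound_def by (meson cnorm_nonneg mult_right_mono order_trans)

lemma op_bound_zero: "op_bound A B \<Longrightarrow> A 0 = 0"
  unfolding op_bound_def using cnorm_eq_zero_iff cnorm_nonneg
  by (metis cnorm_zero mult_zero_right order_antisym)

lemma bounded_cop_op_bound:
  assumes "bounded_cop A"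
  shows "\<exists>B. op_bound A B"
proof -
  obtain B where "\<forall>x. cnorm (A x) \<le> B * cnorm x"
    using assms unfolding bounded_cop_def by blast
  then have "op_bound A (max B 1)"
    unfolding op_bound_def by (meson cnorm_nonneg max.cobounded1 max.cobounded2 mult_right_mono order_trans)
  then show ?thesis ..
qed

lemma bounded_cop_uniform_op_bound:
  assumes "finite \<A>" "\<forall>A\<in>\<A>. bounded_cop A"
  shows "\<exists>B. \<forall>A\<in>\<A>. op_bound A B"
  using assms
proof (induction \<A> rule: finite_induct)
  case empty
  show ?case by simp
next
  case (insert A \<A>)
  obtain B where B: "\<forall>A'\<in>\<A>. op_bound A' B"
    using insert.IH insert.prems by blast
  obtain B' where B': "op_bound A B'"
    using bounded_cop_op_bound insert.prems by blast
  have "\<forall>A'\<in>insert A \<A>. op_bound A' (max B B')"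
    using B B' op_bound_mono by (metis insert_iff max.cobounded1 max.cobounded2)
  then show ?case ..
qed

text \<open>No Cauchy--Schwarz inequality is needed: \<open>cnorm (As y)^2 = Re (cinner (A (As y)) y)\<close>,
  and \<open>two_Re_cinner_le\<close> with \<open>t = 1 / B^2\<close> bounds the right-hand side.\<close>
lemma op_bound_adjoint:
  assumes bound: "op_bound A B" and adj: "is_adjoint A As"
  shows "op_bound As B"
  unfolding op_bound_def
proof (intro conjI allI)
  show B: "1 \<le> B"
    using bound by (rule op_bound_ge_1)
  fix y
  define s a t where "s = cnorm (As y)" and "a = A (As y)" and "t = 1 / (B * B)"
  have "cnorm a \<le> B * s"
    using bound unfolding op_bound_def a_def s_def by simp
  then have "(cnorm a)\<^sup>2 \<le> (B * s)\<^sup>2"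
    by (rule power_mono[OF _ cnorm_nonneg])
  then have "t\<^sup>2 * (cnorm a)\<^sup>2 \<le> t\<^sup>2 * (B * s)\<^sup>2"
    by (rule mult_left_mono) simp
  moreover have "Re (cinner a y) = s\<^sup>2"
    unfolding s_def a_def cnorm_power2 using adj unfolding is_adjoint_def by simp
  then have "2 * t * s\<^sup>2 \<le> t\<^sup>2 * (cnorm a)\<^sup>2 + (cnorm y)\<^sup>2"
    using two_Re_cinner_le[of t a y] by simp
  ultimately have "2 * t * s\<^sup>2 \<le> t\<^sup>2 * (B * s)\<^sup>2 + (cnorm y)\<^sup>2"
    by linarith
  moreover have "t\<^sup>2 * (B * s)\<^sup>2 = s\<^sup>2 / B\<^sup>2" "2 * t * s\<^sup>2 = 2 * (s\<^sup>2 / B\<^sup>2)"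
    using B unfolding t_def by (simp_all add: field_simps power2_eq_square)
  ultimately have "s\<^sup>2 / B\<^sup>2 \<le> (cnorm y)\<^sup>2"
    by simp
  then have "s\<^sup>2 \<le> (B * cnorm y)\<^sup>2"
    using B by (simp add: field_simps power_mult_distrib)
  then show "cnorm (As y) \<le> B * cnorm y"
    unfolding s_def by (rule power2_le_imp_le) (use B cnorm_nonneg[of y] in simp)
qed

section \<open>Truncated norms and level bounds\<close>

lemma sum_apply: "(\<Sum>j\<in>J. f j) x = (\<Sum>j\<in>J. f j x :: 'a::comm_monoid_add)"
  by (induction J rule: infinite_finite_induct) auto

definition supported_below :: "nat \<Rightarrow> (nat \<Rightarrow> 'a::cinner_space) \<Rightarrow> bool" where
  "supported_below q u \<longleftrightarrow> (\<forall>i\<ge>q. u i = 0)"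

definition trunc_sqnorm :: "nat \<Rightarrow> (nat \<Rightarrow> 'a::cinner_space) \<Rightarrow> real" where
  "trunc_sqnorm q u = (\<Sum>i<q. cnorm (u i) ^ 2)"

lemma Dspace_supported_below: "u \<in> Dspace \<Longrightarrow> \<exists>q. supported_below q u"
  unfolding Dspace_def supported_below_def
  by (metis (mono_tags) finite_nat_set_iff_bounded_le le_imp_less_Suc mem_Collect_eq not_less)

lemma supported_below_Suc: "supported_below q u \<Longrightarrow> supported_below (Suc q) u"
  unfolding supported_below_def by simp

lemma supported_below_add: "supported_below q u \<Longrightarrow> supported_below q v \<Longrightarrow> supported_below q (u + v)"
  unfolding supported_below_def by simp

lemma supported_below_uminus: "supported_below q u \<Longrightarrow> supported_below q (- u)"
  unfolding supported_below_def by simp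

lemma supported_below_sum:
  "(\<And>j. j \<in> J \<Longrightarrow> supported_below q (f j)) \<Longrightarrow> supported_below q (\<Sum>j\<in>J. f j)"
  unfolding supported_below_def sum_apply by simp

lemma supported_below_lift: "op_bound A B \<Longrightarrow> supported_below q u \<Longrightarrow> supported_below q (lift A u)"
  unfolding supported_below_def lift_def using op_bound_zero by fastforce

lemma trunc_sqnorm_nonneg: "0 \<le> trunc_sqnorm q u"
  unfolding trunc_sqnorm_def by (simp add: sum_nonneg)

lemma trunc_sqnorm_Suc: "supported_below q u \<Longrightarrow> trunc_sqnorm (Suc q) u = trunc_sqnorm q u"
  unfolding supported_below_def trunc_sqnorm_def by simp

lemma Hnorm_eq_sqrt_trunc_sqnorm:
  assumes "supported_below q u"
  shows "Hnorm u = sqrt (trunc_sqnorm q u)"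
proof -
  have "{i. u i \<noteq> 0} \<subseteq> {..<q}"
    using assms unfolding supported_below_def by (auto simp: not_less[symmetric])
  then have "(\<Sum>i\<in>{i. u i \<noteq> 0}. cnorm (u i) ^ 2) = (\<Sum>i<q. cnorm (u i) ^ 2)"
    by (intro sum.mono_neutral_left) auto
  then show ?thesis
    unfolding Hnorm_def trunc_sqnorm_def by simp
qed

lemma trunc_sqnorm_uminus [simp]: "trunc_sqnorm q (- u) = trunc_sqnorm q u"
  unfolding trunc_sqnorm_def by simp

lemma trunc_sqnorm_add_le: "trunc_sqnorm q (u + v) \<le> 2 * trunc_sqnorm q u + 2 * trunc_sqnorm q v"
  unfolding trunc_sqnorm_def
  by (simp add: sum_distrib_left sum.distrib[symmetric] sum_mono cnorm_add_power2_le)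

lemma trunc_sqnorm_sum_le:
  "finite J \<Longrightarrow> trunc_sqnorm q (\<Sum>j\<in>J. f j) \<le> 2 ^ card J * (\<Sum>j\<in>J. trunc_sqnorm q (f j))"
proof (induction J rule: finite_induct)
  case empty
  then show ?case
    unfolding trunc_sqnorm_def by simp
next
  case (insert x J)
  have "trunc_sqnorm q (\<Sum>j\<in>insert x J. f j) = trunc_sqnorm q (f x + (\<Sum>j\<in>J. f j))"
    using insert by simp
  also have "\<dots> \<le> 2 * trunc_sqnorm q (f x) + 2 * trunc_sqnorm q (\<Sum>j\<in>J. f j)"
    by (rule trunc_sqnorm_add_le)
  also have "\<dots> \<le> 2 ^ Suc (card J) * trunc_sqnorm q (f x) + 2 ^ Suc (card J) * (\<Sum>j\<in>J. trunc_sqnorm q (f j))"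
    using insert.IH trunc_sqnorm_nonneg[of q "f x"]
    by (intro add_mono mult_right_mono) auto
  also have "\<dots> = 2 ^ card (insert x J) * (\<Sum>j\<in>insert x J. trunc_sqnorm q (f j))"
    using insert by (simp add: distrib_left)
  finally show ?case .
qed

lemma trunc_sqnorm_lift_le:
  assumes "op_bound A B"
  shows "trunc_sqnorm q (lift A u) \<le> B\<^sup>2 * trunc_sqnorm q u"
proof -
  have "cnorm (A (u i)) ^ 2 \<le> B\<^sup>2 * cnorm (u i) ^ 2" for i
    using assms unfolding op_bound_def power_mult_distrib[symmetric]
    by (intro power_mono) (auto simp: cnorm_nonneg)
  then show ?thesis
    unfolding trunc_sqnorm_def lift_def sum_distrib_left by (rule sum_mono)
qed

definition level_bounded :: "((nat \<Rightarrow> 'a::cinner_space) \<Rightarrow> (nat \<Rightarrow> 'a)) \<Rightarrow> real \<Rightarrow> nat \<Rightarrow> bool" where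
  "level_bounded X D e \<longleftrightarrow> (\<forall>q v. supported_below q v \<longrightarrow>
     supported_below (Suc q) (X v) \<and> trunc_sqnorm (Suc q) (X v) \<le> D * real (Suc q) ^ e * trunc_sqnorm q v)"

lemma level_boundedI:
  assumes "\<And>q v. supported_below q v \<Longrightarrow> supported_below (Suc q) (X v)"
    and "\<And>q v. supported_below q v \<Longrightarrow> trunc_sqnorm (Suc q) (X v) \<le> D * real (Suc q) ^ e * trunc_sqnorm q v"
  shows "level_bounded X D e"
  using assms unfolding level_bounded_def by blast

lemma level_bounded_supported:
  "level_bounded X D e \<Longrightarrow> supported_below q v \<Longrightarrow> supported_below (Suc q) (X v)"
  unfolding level_bounded_def by blast

lemma level_bounded_trunc_sqnorm_le:
  "level_bounded X D e \<Longrightarrow> supported_below q v \<Longrightarrow>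
     trunc_sqnorm (Suc q) (X v) \<le> D * real (Suc q) ^ e * trunc_sqnorm q v"
  unfolding level_bounded_def by blast

lemma level_bounded_mono:
  assumes X: "level_bounded X D e" and "0 \<le> D" "D \<le> D'" "e \<le> e'"
  shows "level_bounded X D' e'"
proof (rule level_boundedI)
  fix q and v :: "nat \<Rightarrow> 'a"
  assume v: "supported_below q v"
  show "supported_below (Suc q) (X v)"
    using X v by (rule level_bounded_supported)
  have "D * real (Suc q) ^ e \<le> D' * real (Suc q) ^ e'"
    using assms by (intro mult_mono power_increasing) auto
  then have "D * real (Suc q) ^ e * trunc_sqnorm q v \<le> D' * real (Suc q) ^ e' * trunc_sqnorm q v"
    by (rule mult_right_mono) (rule trunc_sqnorm_nonneg)
  then show "trunc_sqnorm (Suc q) (X v) \<le> D' * real (Suc q) ^ e' * trunc_sqnorm q v"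
    using level_bounded_trunc_sqnorm_le[OF X v] by linarith
qed

lemma level_bounded_add:
  assumes X: "level_bounded X D\<^sub>1 e" and Y: "level_bounded Y D\<^sub>2 e"
  shows "level_bounded (\<lambda>v. X v + Y v) (2 * D\<^sub>1 + 2 * D\<^sub>2) e"
proof (rule level_boundedI)
  fix q and v :: "nat \<Rightarrow> 'a"
  assume v: "supported_below q v"
  show "supported_below (Suc q) (X v + Y v)"
    using X Y v by (intro supported_below_add level_bounded_supported)
  have "trunc_sqnorm (Suc q) (X v + Y v) \<le> 2 * trunc_sqnorm (Suc q) (X v) + 2 * trunc_sqnorm (Suc q) (Y v)"
    by (rule trunc_sqnorm_add_le)
  also have "\<dots> \<le> (2 * D\<^sub>1 + 2 * D\<^sub>2) * real (Suc q) ^ e * trunc_sqnorm q v"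
    using level_bounded_trunc_sqnorm_le[OF X v] level_bounded_trunc_sqnorm_le[OF Y v]
    by (simp add: algebra_simps)
  finally show "trunc_sqnorm (Suc q) (X v + Y v) \<le> (2 * D\<^sub>1 + 2 * D\<^sub>2) * real (Suc q) ^ e * trunc_sqnorm q v" .
qed

lemma level_bounded_uminus: "level_bounded X D e \<Longrightarrow> level_bounded (\<lambda>v. - X v) D e"
  unfolding level_bounded_def trunc_sqnorm_uminus using supported_below_uminus by blast

lemma level_bounded_sum:
  fixes X :: "'j \<Rightarrow> (nat \<Rightarrow> 'a::cinner_space) \<Rightarrow> (nat \<Rightarrow> 'a)"
  assumes "finite J" and X: "\<And>j. j \<in> J \<Longrightarrow> level_bounded (X j) D e"
  shows "level_bounded (\<lambda>v. \<Sum>j\<in>J. X j v) (2 ^ card J * real (card J) * D) e"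
proof (rule level_boundedI)
  fix q and v :: "nat \<Rightarrow> 'a"
  assume v: "supported_below q v"
  show "supported_below (Suc q) (\<Sum>j\<in>J. X j v)"
    using X v by (intro supported_below_sum level_bounded_supported)
  have "trunc_sqnorm (Suc q) (\<Sum>j\<in>J. X j v) \<le> 2 ^ card J * (\<Sum>j\<in>J. trunc_sqnorm (Suc q) (X j v))"
    using \<open>finite J\<close> by (rule trunc_sqnorm_sum_le)
  also have "\<dots> \<le> 2 ^ card J * (\<Sum>j\<in>J. D * real (Suc q) ^ e * trunc_sqnorm q v)"
    using X v by (intro mult_left_mono sum_mono level_bounded_trunc_sqnorm_le) auto
  also have "\<dots> = 2 ^ card J * real (card J) * D * real (Suc q) ^ e * trunc_sqnorm q v"
    by simp
  finally show "trunc_sqnorm (Suc q) (\<Sum>j\<in>J. X j v) \<le> 2 ^ card J * real (card J) * D * real (Suc q) ^ e * trunc_sqnorm q v" .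
qed

lemma level_bounded_lift_comp:
  assumes A: "op_bound A B" and X: "level_bounded X D e"
  shows "level_bounded (\<lambda>v. lift A (X v)) (B\<^sup>2 * D) e"
proof (rule level_boundedI)
  fix q and v :: "nat \<Rightarrow> 'a"
  assume v: "supported_below q v"
  show "supported_below (Suc q) (lift A (X v))"
    using A X v by (intro supported_below_lift level_bounded_supported)
  have "trunc_sqnorm (Suc q) (lift A (X v)) \<le> B\<^sup>2 * trunc_sqnorm (Suc q) (X v)"
    using A by (rule trunc_sqnorm_lift_le)
  also have "\<dots> \<le> B\<^sup>2 * (D * real (Suc q) ^ e * trunc_sqnorm q v)"
    using level_bounded_trunc_sqnorm_le[OF X v] by (simp add: mult_left_mono)
  finally show "trunc_sqnorm (Suc q) (lift A (X v)) \<le> B\<^sup>2 * D * real (Suc q) ^ e * trunc_sqnorm q v"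
    by (simp add: mult.assoc)
qed

lemma level_bounded_comp_lift:
  assumes A: "op_bound A B" and X: "level_bounded X D e" and "0 \<le> D"
  shows "level_bounded (\<lambda>v. X (lift A v)) (D * B\<^sup>2) e"
proof (rule level_boundedI)
  fix q and v :: "nat \<Rightarrow> 'a"
  assume v: "supported_below q v"
  then have Av: "supported_below q (lift A v)"
    using A by (intro supported_below_lift)
  with X show "supported_below (Suc q) (X (lift A v))"
    by (rule level_bounded_supported)
  have "trunc_sqnorm (Suc q) (X (lift A v)) \<le> D * real (Suc q) ^ e * trunc_sqnorm q (lift A v)"
    using X Av by (rule level_bounded_trunc_sqnorm_le)
  also have "\<dots> \<le> D * real (Suc q) ^ e * (B\<^sup>2 * trunc_sqnorm q v)"
    using trunc_sqnorm_lift_le[OF A] \<open>0 \<le> D\<close> by (intro mult_left_mono) auto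
  finally show "trunc_sqnorm (Suc q) (X (lift A v)) \<le> D * B\<^sup>2 * real (Suc q) ^ e * trunc_sqnorm q v"
    by (simp add: algebra_simps)
qed

lemma level_bounded_lift:
  assumes A: "op_bound A B"
  shows "level_bounded (lift A) (B\<^sup>2) e"
proof (rule level_boundedI)
  fix q and v :: "nat \<Rightarrow> 'a"
  assume v: "supported_below q v"
  then have Av: "supported_below q (lift A v)"
    using A by (intro supported_below_lift)
  then show "supported_below (Suc q) (lift A v)"
    by (rule supported_below_Suc)
  have "trunc_sqnorm q v \<le> real (Suc q) ^ e * trunc_sqnorm q v"
    using trunc_sqnorm_nonneg[of q v] by (simp add: mult_le_cancel_right1)
  then have "B\<^sup>2 * trunc_sqnorm q v \<le> B\<^sup>2 * real (Suc q) ^ e * trunc_sqnorm q v"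
    by (simp add: mult.assoc mult_left_mono)
  then show "trunc_sqnorm (Suc q) (lift A v) \<le> B\<^sup>2 * real (Suc q) ^ e * trunc_sqnorm q v"
    using trunc_sqnorm_lift_le[OF A, of q v] trunc_sqnorm_Suc[OF Av] by linarith
qed

section \<open>The atom--cavity coefficients\<close>

lemma level_bounded_bdag: "level_bounded bdag 1 1"
proof (rule level_boundedI)
  fix q and v :: "nat \<Rightarrow> 'a"
  assume v: "supported_below q v"
  then show "supported_below (Suc q) (bdag v)"
    unfolding supported_below_def bdag_def by auto
  have "trunc_sqnorm (Suc q) (bdag v) = (\<Sum>i<q. cnorm (bdag v (Suc i)) ^ 2)"
    unfolding trunc_sqnorm_def by (subst sum.lessThan_Suc_shift) (simp add: bdag_def)
  also have "\<dots> = (\<Sum>i<q. real (Suc i) * cnorm (v i) ^ 2)"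
    unfolding bdag_def by (simp add: cnorm_scaleC_of_real_power2 del: of_nat_Suc)
  also have "\<dots> \<le> (\<Sum>i<q. real (Suc q) * cnorm (v i) ^ 2)"
    by (intro sum_mono mult_right_mono) auto
  also have "\<dots> = 1 * real (Suc q) ^ 1 * trunc_sqnorm q v"
    unfolding trunc_sqnorm_def by (simp add: sum_distrib_left)
  finally show "trunc_sqnorm (Suc q) (bdag v) \<le> 1 * real (Suc q) ^ 1 * trunc_sqnorm q v" .
qed

lemma level_bounded_bann: "level_bounded bann 1 1"
proof (rule level_boundedI)
  fix q and v :: "nat \<Rightarrow> 'a"
  assume v: "supported_below q v"
  then show "supported_below (Suc q) (bann v)"
    unfolding supported_below_def bann_def by auto
  have "trunc_sqnorm (Suc q) (bann v) = (\<Sum>i<Suc q. real (Suc i) * cnorm (v (Suc i)) ^ 2)"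
    unfolding trunc_sqnorm_def bann_def by (simp add: cnorm_scaleC_of_real_power2 del: of_nat_Suc)
  also have "\<dots> \<le> real (Suc q) * (\<Sum>i<Suc q. cnorm (v (Suc i)) ^ 2)"
    unfolding sum_distrib_left by (intro sum_mono mult_right_mono) auto
  also have "\<dots> \<le> real (Suc q) * trunc_sqnorm (Suc (Suc q)) v"
    unfolding trunc_sqnorm_def sum.lessThan_Suc_shift[of _ "Suc q"] by (intro mult_left_mono) auto
  also have "\<dots> = 1 * real (Suc q) ^ 1 * trunc_sqnorm q v"
    using trunc_sqnorm_Suc[OF supported_below_Suc[OF v]] trunc_sqnorm_Suc[OF v] by simp
  finally show "trunc_sqnorm (Suc q) (bann v) \<le> 1 * real (Suc q) ^ 1 * trunc_sqnorm q v" .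
qed

lemma level_bounded_numop: "level_bounded numop 1 2"
proof (rule level_boundedI)
  fix q and v :: "nat \<Rightarrow> 'a"
  assume v: "supported_below q v"
  then show "supported_below (Suc q) (numop v)"
    unfolding supported_below_def numop_def by auto
  have "(of_nat i :: complex) = complex_of_real (real i)" for i
    by simp
  then have "trunc_sqnorm (Suc q) (numop v) = (\<Sum>i<Suc q. (real i)\<^sup>2 * cnorm (v i) ^ 2)"
    unfolding trunc_sqnorm_def numop_def by (simp only: cnorm_scaleC_of_real_power2)
  also have "\<dots> \<le> (\<Sum>i<Suc q. (real (Suc q))\<^sup>2 * cnorm (v i) ^ 2)"
    by (intro sum_mono mult_right_mono power_mono) auto
  also have "\<dots> = 1 * real (Suc q) ^ 2 * trunc_sqnorm (Suc q) v"
    unfolding trunc_sqnorm_def by (simp add: sum_distrib_left del: sum.lessThan_Suc)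
  also have "\<dots> = 1 * real (Suc q) ^ 2 * trunc_sqnorm q v"
    using trunc_sqnorm_Suc[OF v] by simp
  finally show "trunc_sqnorm (Suc q) (numop v) \<le> 1 * real (Suc q) ^ 2 * trunc_sqnorm q v" .
qed

lemma level_bounded_Lop:
  assumes "op_bound F B" "op_bound G B"
  shows "level_bounded (Lop F G) (4 * B\<^sup>2) 1"
proof -
  have "level_bounded (\<lambda>u. lift F (bdag u) + lift G u) (2 * (B\<^sup>2 * 1) + 2 * B\<^sup>2) 1"
    by (rule level_bounded_add[OF level_bounded_lift_comp[OF assms(1) level_bounded_bdag] level_bounded_lift[OF assms(2)]])
  then show ?thesis
    unfolding Lop_def[abs_def] by simp
qed

lemma level_bounded_Ldagop:
  assumes "op_bound F B" "op_bound G B"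
  shows "level_bounded (Ldagop F G) (4 * B\<^sup>2) 1"
proof -
  have "level_bounded (\<lambda>u. lift F (bann u) + lift G u) (2 * (B\<^sup>2 * 1) + 2 * B\<^sup>2) 1"
    by (rule level_bounded_add[OF level_bounded_lift_comp[OF assms(1) level_bounded_bann] level_bounded_lift[OF assms(2)]])
  then show ?thesis
    unfolding Ldagop_def[abs_def] by simp
qed

lemma level_bounded_Kop:
  assumes "op_bound E11 B" "op_bound E10 B" "op_bound E01 B" "op_bound E00 B"
  shows "level_bounded (Kop E11 E10 E01 E00) (22 * B\<^sup>2) 2"
proof -
  have bdag: "level_bounded bdag 1 2" and bann: "level_bounded bann 1 2"
    by (rule level_bounded_mono[OF level_bounded_bdag], simp_all)
      (rule level_bounded_mono[OF level_bounded_bann], simp_all)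
  have "level_bounded (\<lambda>u. lift E11 (numop u) + lift E10 (bdag u) + lift E01 (bann u) + lift E00 u)
     (2 * (2 * (2 * (B\<^sup>2 * 1) + 2 * (B\<^sup>2 * 1)) + 2 * (B\<^sup>2 * 1)) + 2 * B\<^sup>2) 2"
    by (rule level_bounded_add[OF level_bounded_add[OF level_bounded_add[OF
          level_bounded_lift_comp[OF assms(1) level_bounded_numop] level_bounded_lift_comp[OF assms(2) bdag]]
          level_bounded_lift_comp[OF assms(3) bann]] level_bounded_lift[OF assms(4)]])
  then show ?thesis
    unfolding Kop_def[abs_def] by simp
qed

lemma level_bounded_M:
  assumes "\<And>j. j \<in> {1..n} \<Longrightarrow> op_bound (S j) B \<and> op_bound (Fs j) B \<and> op_bound (Gs j) B"
  shows "level_bounded (\<lambda>u. - (\<Sum>j\<in>{1..n}. lift (S j) (Ldagop (Fs j) (Gs j) u)))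
    (2 ^ n * real n * (4 * B ^ 4)) 1"
proof -
  have "level_bounded (\<lambda>u. \<Sum>j\<in>{1..n}. lift (S j) (Ldagop (Fs j) (Gs j) u))
      (2 ^ card {1..n} * real (card {1..n}) * (B\<^sup>2 * (4 * B\<^sup>2))) 1"
    using assms by (intro level_bounded_sum level_bounded_lift_comp level_bounded_Ldagop) auto
  moreover have "B\<^sup>2 * (4 * B\<^sup>2) = 4 * B ^ 4"
    by algebra
  ultimately show ?thesis
    using level_bounded_uminus by fastforce
qed

lemma level_bounded_Mdag:
  assumes "\<And>j. j \<in> {1..n} \<Longrightarrow> op_bound (Ss j) B \<and> op_bound (F j) B \<and> op_bound (G j) B"
  shows "level_bounded (\<lambda>u. - (\<Sum>j\<in>{1..n}. Lop (F j) (G j) (lift (Ss j) u)))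
    (2 ^ n * real n * (4 * B ^ 4)) 1"
proof -
  have "level_bounded (\<lambda>u. \<Sum>j\<in>{1..n}. Lop (F j) (G j) (lift (Ss j) u))
      (2 ^ card {1..n} * real (card {1..n}) * (4 * B\<^sup>2 * B\<^sup>2)) 1"
    using assms by (intro level_bounded_sum level_bounded_comp_lift level_bounded_Lop) auto
  moreover have "4 * B\<^sup>2 * B\<^sup>2 = 4 * B ^ 4"
    by algebra
  ultimately show ?thesis
    using level_bounded_uminus by fastforce
qed

lemma level_bounded_opval:
  assumes E: "op_bound E11 B" "op_bound E10 B" "op_bound E01 B" "op_bound E00 B"
    and Es: "op_bound E11s B" "op_bound E10s B" "op_bound E01s B" "op_bound E00s B"
    and FG: "\<And>i. i \<in> {1..n} \<Longrightarrow> op_bound (F i) B \<and> op_bound (G i) B \<and> op_bound (Fs i) B \<and> op_bound (Gs i) B"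
    and S: "\<And>i j. i \<in> {1..n} \<Longrightarrow> j \<in> {1..n} \<Longrightarrow> op_bound (S i j) B \<and> op_bound (Ss i j) B"
    and D: "22 * B\<^sup>2 \<le> D" "2 ^ n * real n * (4 * B ^ 4) \<le> D"
    and x: "valid_label n x"
  shows "level_bounded (opval n E11 E10 E01 E00 E11s E10s E01s E00s F G Fs Gs S Ss x)
           D (if is_K_label x then 2 else 1)"
proof -
  have D': "c * B\<^sup>2 \<le> D" if "c \<le> 22" for c
    using D(1) mult_right_mono[OF that, of "B\<^sup>2"] by simp
  show ?thesis
  proof (cases x)
    case OK
    then show ?thesis
      using level_bounded_mono[OF level_bounded_Kop[OF E] _ D'] by simp
  next
    case OKs
    then show ?thesis
      using level_bounded_mono[OF level_bounded_Kop[OF Es(1,3,2,4)] _ D'] by simp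
  next
    case (OL i)
    with x FG have "op_bound (F i) B" "op_bound (G i) B" by auto
    from level_bounded_mono[OF level_bounded_Lop[OF this] _ D'] OL show ?thesis
      by simp
  next
    case (OLs i)
    with x FG have "op_bound (Fs i) B" "op_bound (Gs i) B" by auto
    from level_bounded_mono[OF level_bounded_Ldagop[OF this] _ D'] OLs show ?thesis
      by simp
  next
    case (OM i)
    with x FG S have "level_bounded (\<lambda>u. - (\<Sum>j\<in>{1..n}. lift (S i j) (Ldagop (Fs j) (Gs j) u)))
        (2 ^ n * real n * (4 * B ^ 4)) 1"
      by (intro level_bounded_M) auto
    from level_bounded_mono[OF this _ D(2)] OM show ?thesis
      by simp
  next
    case (OMs i)
    with x FG S have "level_bounded (\<lambda>u. - (\<Sum>j\<in>{1..n}. Lop (F j) (G j) (lift (Ss i j) u)))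
        (2 ^ n * real n * (4 * B ^ 4)) 1"
      by (intro level_bounded_Mdag) auto
    from level_bounded_mono[OF this _ D(2)] OMs show ?thesis
      by simp
  next
    case (ON i j)
    with x S have "op_bound (S i j) B" by auto
    from level_bounded_mono[OF level_bounded_lift[OF this, of 1] _ D'[of 1, simplified]] ON show ?thesis
      by simp
  next
    case (ONs i j)
    with x S have "op_bound (Ss i j) B" by auto
    from level_bounded_mono[OF level_bounded_lift[OF this, of 1] _ D'[of 1, simplified]] ONs show ?thesis
      by simp
  qed
qed

locale bounded_atom_cavity_coefficients =
  fixes n :: nat
    and E11 E10 E01 E00 E11s E10s E01s E00s :: "'a::cinner_space \<Rightarrow> 'a"
    and F G Fs Gs :: "nat \<Rightarrow> 'a \<Rightarrow> 'a"
    and S Ss :: "nat \<Rightarrow> nat \<Rightarrow> 'a \<Rightarrow> 'a"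
  assumes bdd_E: "bounded_cop E11" "bounded_cop E10" "bounded_cop E01" "bounded_cop E00"
    and adj_E: "is_adjoint E11 E11s" "is_adjoint E10 E10s" "is_adjoint E01 E01s" "is_adjoint E00 E00s"
    and bdd_FG: "\<And>i. 1 \<le> i \<Longrightarrow> i \<le> n \<Longrightarrow> bounded_cop (F i) \<and> bounded_cop (G i)"
    and adj_FG: "\<And>i. 1 \<le> i \<Longrightarrow> i \<le> n \<Longrightarrow> is_adjoint (F i) (Fs i) \<and> is_adjoint (G i) (Gs i)"
    and bdd_S: "\<And>i j. 1 \<le> i \<Longrightarrow> i \<le> n \<Longrightarrow> 1 \<le> j \<Longrightarrow> j \<le> n \<Longrightarrow> bounded_cop (S i j)"
    and adj_S: "\<And>i j. 1 \<le> i \<Longrightarrow> i \<le> n \<Longrightarrow> 1 \<le> j \<Longrightarrow> j \<le> n \<Longrightarrow> is_adjoint (S i j) (Ss i j)"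
begin

lemma uniform_op_bound:
  obtains B where "op_bound E11 B" "op_bound E10 B" "op_bound E01 B" "op_bound E00 B"
    and "op_bound E11s B" "op_bound E10s B" "op_bound E01s B" "op_bound E00s B"
    and "\<And>i. i \<in> {1..n} \<Longrightarrow> op_bound (F i) B \<and> op_bound (G i) B \<and> op_bound (Fs i) B \<and> op_bound (Gs i) B"
    and "\<And>i j. i \<in> {1..n} \<Longrightarrow> j \<in> {1..n} \<Longrightarrow> op_bound (S i j) B \<and> op_bound (Ss i j) B"
proof -
  define \<A> where "\<A> = {E11, E10, E01, E00} \<union> F ` {1..n} \<union> G ` {1..n} \<union> case_prod S ` ({1..n} \<times> {1..n})"
  have "\<forall>A\<in>F ` {1..n} \<union> G ` {1..n} \<union> case_prod S ` ({1..n} \<times> {1..n}). bounded_cop A"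
    using bdd_FG bdd_S by auto
  then have "\<forall>A\<in>\<A>. bounded_cop A"
    unfolding \<A>_def using bdd_E by (simp only: ball_Un) simp
  moreover have "finite \<A>"
    unfolding \<A>_def by simp
  ultimately obtain B where B: "\<forall>A\<in>\<A>. op_bound A B"
    by (metis bounded_cop_uniform_op_bound)
  have E: "op_bound E11 B" "op_bound E10 B" "op_bound E01 B" "op_bound E00 B"
    by (simp_all add: B[unfolded \<A>_def])
  moreover have "op_bound E11s B" "op_bound E10s B" "op_bound E01s B" "op_bound E00s B"
    using op_bound_adjoint E adj_E by blast+
  moreover have "op_bound (F i) B \<and> op_bound (G i) B \<and> op_bound (Fs i) B \<and> op_bound (Gs i) B"
    if "i \<in> {1..n}" for i
  proof -
    have "op_bound (F i) B" "op_bound (G i) B"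
      using that by (simp_all add: B[unfolded \<A>_def])
    with adj_FG that show ?thesis
      using op_bound_adjoint by fastforce
  qed
  moreover have "op_bound (S i j) B \<and> op_bound (Ss i j) B" if "i \<in> {1..n}" "j \<in> {1..n}" for i j
  proof -
    have "op_bound (S i j) B"
      using that B unfolding \<A>_def by force
    with adj_S that show ?thesis
      using op_bound_adjoint by fastforce
  qed
  ultimately show ?thesis
    by (rule that)
qed

lemma opval_uniformly_level_bounded:
  obtains D where "0 < D" and "\<forall>x. valid_label n x \<longrightarrow>
    level_bounded (opval n E11 E10 E01 E00 E11s E10s E01s E00s F G Fs Gs S Ss x) D (if is_K_label x then 2 else 1)"
proof (rule uniform_op_bound)
  fix B
  assume E: "op_bound E11 B" "op_bound E10 B" "op_bound E01 B" "op_bound E00 B"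
    and Es: "op_bound E11s B" "op_bound E10s B" "op_bound E01s B" "op_bound E00s B"
    and FG: "\<And>i. i \<in> {1..n} \<Longrightarrow> op_bound (F i) B \<and> op_bound (G i) B \<and> op_bound (Fs i) B \<and> op_bound (Gs i) B"
    and S: "\<And>i j. i \<in> {1..n} \<Longrightarrow> j \<in> {1..n} \<Longrightarrow> op_bound (S i j) B \<and> op_bound (Ss i j) B"
  define D where "D = max (22 * B\<^sup>2) (2 ^ n * real n * (4 * B ^ 4))"
  have "0 < D"
    using op_bound_ge_1[OF E(1)] unfolding D_def by (simp add: less_max_iff_disj)
  moreover have "level_bounded (opval n E11 E10 E01 E00 E11s E10s E01s E00s F G Fs Gs S Ss x) D
      (if is_K_label x then 2 else 1)" if "valid_label n x" for x
    using E Es FG S _ _ that by (rule level_bounded_opval) (simp_all add: D_def)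
  ultimately show ?thesis
    using that by blast
qed

end

section \<open>Products of coefficients\<close>

lemma fact_add_le_pow2: "fact (a + b) \<le> 2 ^ (a + b) * fact a * (fact b :: nat)"
proof -
  have "fact a * fact b * ((a + b) choose a) = (fact (a + b) :: nat)"
    using binomial_fact_lemma[of a "a + b"] by simp
  moreover have "(a + b) choose a \<le> 2 ^ (a + b)"
    by (rule binomial_le_pow2)
  ultimately show ?thesis
    by (metis mult.commute mult_le_mono2 mult.assoc)
qed

lemma fact_add_add_le:
  assumes "m \<le> l"
  shows "fact (N + l + m) \<le> (2::real) ^ N * 4 ^ l * fact N * fact (l + m)"
proof -
  have "(fact (N + (l + m)) :: real) \<le> 2 ^ (N + (l + m)) * fact N * fact (l + m)"
    using of_nat_mono[OF fact_add_le_pow2[of N "l + m"]] by (simp only: of_nat_mult of_nat_fact of_nat_power of_nat_numeral)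
  also have "\<dots> = 2 ^ N * 2 ^ (l + m) * fact N * fact (l + m)"
    by (simp add: power_add)
  also have "\<dots> \<le> 2 ^ N * 4 ^ l * fact N * fact (l + m)"
  proof -
    have "(2::real) ^ (l + m) \<le> 2 ^ (l + l)"
      using assms by (intro power_increasing) auto
    also have "\<dots> = 4 ^ l"
      by (simp add: power_add[symmetric] mult_2[symmetric] power_mult)
    finally show ?thesis
      by (intro mult_right_mono mult_left_mono) auto
  qed
  finally show ?thesis
    by (simp add: add.assoc)
qed

lemma Suc_mult_fact_le: "real (Suc a) * fact (a + m) \<le> (fact (Suc a + m) :: real)"
proof -
  have "Suc a * fact (a + m) \<le> (fact (Suc a + m) :: nat)"
    by simp
  then show ?thesis
    using of_nat_mono by (metis of_nat_fact of_nat_mult)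
qed

lemma Suc_power2_mult_fact_le: "(real (Suc a))\<^sup>2 * fact (a + m) \<le> (fact (Suc a + Suc m) :: real)"
proof -
  have "Suc a * Suc a \<le> Suc (Suc (a + m)) * Suc (a + m)"
    by (intro mult_le_mono) auto
  then have "Suc a * Suc a * fact (a + m) \<le> Suc (Suc (a + m)) * Suc (a + m) * (fact (a + m) :: nat)"
    by (rule mult_le_mono1)
  also have "\<dots> = fact (Suc a + Suc m)"
    by (simp only: add_Suc_right add_Suc fact_Suc of_nat_id mult.assoc)
  finally show ?thesis
    unfolding power2_eq_square using of_nat_mono by (metis of_nat_fact of_nat_mult)
qed

lemma trunc_sqnorm_foldr_le:
  fixes f :: "'l \<Rightarrow> (nat \<Rightarrow> 'a::cinner_space) \<Rightarrow> (nat \<Rightarrow> 'a)" and D :: real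
  assumes f: "\<And>x. x \<in> set xs \<Longrightarrow> level_bounded (f x) D (if K x then 2 else 1)"
    and "0 \<le> D" and u: "supported_below N u"
  shows "supported_below (N + length xs) (foldr f xs u) \<and>
    trunc_sqnorm (N + length xs) (foldr f xs u)
      \<le> D ^ length xs * fact (N + length xs + length (filter K xs)) * trunc_sqnorm N u"
  using f
proof (induction xs)
  case Nil
  have "trunc_sqnorm N u \<le> fact N * trunc_sqnorm N u"
    using trunc_sqnorm_nonneg[of N u] by (simp add: mult_le_cancel_right1)
  with u show ?case by simp
next
  case (Cons x xs)
  define w l m where "w = foldr f xs u" and "l = length xs" and "m = length (filter K xs)"
  have w: "supported_below (N + l) w" "trunc_sqnorm (N + l) w \<le> D ^ l * fact (N + l + m) * trunc_sqnorm N u"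
    using Cons unfolding w_def l_def m_def by auto
  have fx: "level_bounded (f x) D (if K x then 2 else 1)"
    using Cons.prems by simp
  have "trunc_sqnorm (Suc (N + l)) (f x w) \<le> D * real (Suc (N + l)) ^ (if K x then 2 else 1) * trunc_sqnorm (N + l) w"
    using fx w(1) by (rule level_bounded_trunc_sqnorm_le)
  also have "\<dots> \<le> D * real (Suc (N + l)) ^ (if K x then 2 else 1) * (D ^ l * fact (N + l + m) * trunc_sqnorm N u)"
    using w(2) \<open>0 \<le> D\<close> by (intro mult_left_mono) auto
  also have "\<dots> = D ^ Suc l * (real (Suc (N + l)) ^ (if K x then 2 else 1) * fact (N + l + m)) * trunc_sqnorm N u"
    by (simp add: algebra_simps)
  also have "\<dots> \<le> D ^ Suc l * fact (N + Suc l + length (filter K (x # xs))) * trunc_sqnorm N u"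
  proof -
    have "real (Suc (N + l)) ^ (if K x then 2 else 1) * fact (N + l + m)
        \<le> fact (N + Suc l + length (filter K (x # xs)))"
      using Suc_power2_mult_fact_le[of "N + l" m] Suc_mult_fact_le[of "N + l" m]
      unfolding m_def by auto
    then show ?thesis
      using \<open>0 \<le> D\<close> trunc_sqnorm_nonneg[of N u] by (intro mult_right_mono mult_left_mono) auto
  qed
  finally show ?case
    using level_bounded_supported[OF fx w(1)] unfolding w_def l_def by simp
qed

lemma Hnorm_foldr_le:
  fixes f :: "'l \<Rightarrow> (nat \<Rightarrow> 'a::cinner_space) \<Rightarrow> (nat \<Rightarrow> 'a)" and D :: real
  assumes "\<And>x. x \<in> set xs \<Longrightarrow> level_bounded (f x) D (if K x then 2 else 1)"
    and "0 \<le> D" and "supported_below N u"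
  shows "Hnorm (foldr f xs u)
    \<le> sqrt (2 ^ N * fact N * trunc_sqnorm N u) * sqrt (4 * D) ^ length xs * sqrt (fact (length xs + length (filter K xs)))"
proof -
  define l m where "l = length xs" and "m = length (filter K xs)"
  have fold: "supported_below (N + l) (foldr f xs u)"
      "trunc_sqnorm (N + l) (foldr f xs u) \<le> D ^ l * fact (N + l + m) * trunc_sqnorm N u"
    using trunc_sqnorm_foldr_le[of xs f D K N u] assms unfolding l_def m_def by auto
  have "m \<le> l"
    unfolding l_def m_def by simp
  have "Hnorm (foldr f xs u) = sqrt (trunc_sqnorm (N + l) (foldr f xs u))"
    using fold(1) by (rule Hnorm_eq_sqrt_trunc_sqnorm)
  also have "\<dots> \<le> sqrt (D ^ l * fact (N + l + m) * trunc_sqnorm N u)"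
    using fold(2) by simp
  also have "\<dots> \<le> sqrt (D ^ l * (2 ^ N * 4 ^ l * fact N * fact (l + m)) * trunc_sqnorm N u)"
    using fact_add_add_le[OF \<open>m \<le> l\<close>, of N] \<open>0 \<le> D\<close> trunc_sqnorm_nonneg[of N u]
    by (intro real_sqrt_le_mono mult_right_mono mult_left_mono) auto
  also have "\<dots> = sqrt (2 ^ N * fact N * trunc_sqnorm N u) * sqrt (4 * D) ^ l * sqrt (fact (l + m))"
    by (simp add: real_sqrt_mult real_sqrt_power power_mult_distrib algebra_simps)
  finally show ?thesis
    unfolding l_def m_def .
qed

lemma level_bounded_products_growth:
  fixes f :: "'l \<Rightarrow> (nat \<Rightarrow> 'a::cinner_space) \<Rightarrow> (nat \<Rightarrow> 'a)"
  assumes "0 < D" and f: "\<forall>x. P x \<longrightarrow> level_bounded (f x) D (if K x then 2 else 1)"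
  shows "\<exists>\<epsilon>>0. \<forall>u\<in>Dspace. \<exists>c :: nat \<Rightarrow> real. (\<forall>l. 0 \<le> c l) \<and> summable (\<lambda>l. c l * \<epsilon> ^ l) \<and>
    (\<forall>xs. (\<forall>x\<in>set xs. P x) \<longrightarrow>
       Hnorm (foldr f xs u) \<le> c (length xs) * sqrt (fact (length xs + length (filter K xs))))"
proof -
  define r where "r = sqrt (4 * D)"
  have "0 < r"
    unfolding r_def using \<open>0 < D\<close> by simp
  show ?thesis
  proof (intro exI[of _ "1 / (2 * r)"] conjI ballI)
    show "0 < 1 / (2 * r)"
      using \<open>0 < r\<close> by simp
    fix u :: "nat \<Rightarrow> 'a"
    assume "u \<in> Dspace"
    then obtain N where N: "supported_below N u"
      using Dspace_supported_below by blast
    define C where "C = sqrt (2 ^ N * fact N * trunc_sqnorm N u)"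
    show "\<exists>c :: nat \<Rightarrow> real. (\<forall>l. 0 \<le> c l) \<and> summable (\<lambda>l. c l * (1 / (2 * r)) ^ l) \<and>
      (\<forall>xs. (\<forall>x\<in>set xs. P x) \<longrightarrow>
         Hnorm (foldr f xs u) \<le> c (length xs) * sqrt (fact (length xs + length (filter K xs))))"
    proof (intro exI[of _ "\<lambda>l. C * r ^ l"] conjI allI impI)
      show "0 \<le> C * r ^ l" for l
        unfolding C_def using \<open>0 < r\<close> trunc_sqnorm_nonneg[of N u] by simp
      have "(\<lambda>l. C * r ^ l * (1 / (2 * r)) ^ l) = (\<lambda>l. C * (1 / 2) ^ l)"
        using \<open>0 < r\<close> by (simp add: power_divide field_simps)
      then show "summable (\<lambda>l. C * r ^ l * (1 / (2 * r)) ^ l)"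
        by (simp add: summable_geometric)
      fix xs
      assume "\<forall>x\<in>set xs. P x"
      then show "Hnorm (foldr f xs u) \<le> C * r ^ length xs * sqrt (fact (length xs + length (filter K xs)))"
        unfolding C_def r_def using f \<open>0 < D\<close> N by (intro Hnorm_foldr_le) auto
    qed
  qed
qed

theorem mainTheorem6:
  fixes n :: nat
    and E11 E10 E01 E00 E11s E10s E01s E00s :: "'h::chilbert \<Rightarrow> 'h"
    and F G Fs Gs :: "nat \<Rightarrow> 'h \<Rightarrow> 'h"
    and S Ss :: "nat \<Rightarrow> nat \<Rightarrow> 'h \<Rightarrow> 'h"
  assumes n_pos: "1 \<le> n"
    and bdd_E: "bounded_cop E11" "bounded_cop E10" "bounded_cop E01" "bounded_cop E00"
    and adj_E: "is_adjoint E11 E11s" "is_adjoint E10 E10s" "is_adjoint E01 E01s" "is_adjoint E00 E00s"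
    and bdd_FG: "\<And>i. 1 \<le> i \<Longrightarrow> i \<le> n \<Longrightarrow> bounded_cop (F i) \<and> bounded_cop (G i)"
    and adj_FG: "\<And>i. 1 \<le> i \<Longrightarrow> i \<le> n \<Longrightarrow> is_adjoint (F i) (Fs i) \<and> is_adjoint (G i) (Gs i)"
    and bdd_S: "\<And>i j. 1 \<le> i \<Longrightarrow> i \<le> n \<Longrightarrow> 1 \<le> j \<Longrightarrow> j \<le> n \<Longrightarrow> bounded_cop (S i j)"
    and adj_S: "\<And>i j. 1 \<le> i \<Longrightarrow> i \<le> n \<Longrightarrow> 1 \<le> j \<Longrightarrow> j \<le> n \<Longrightarrow> is_adjoint (S i j) (Ss i j)"
    and HP_K: "\<And>u. u \<in> Dspace \<Longrightarrow>
        Kop E11 E10 E01 E00 u + Kop E11s E01s E10s E00s u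
          = - (\<Sum>i\<in>{1..n}. Lop (F i) (G i) (Ldagop (Fs i) (Gs i) u))"
    and HP_N1: "\<And>m l u. 1 \<le> m \<Longrightarrow> m \<le> n \<Longrightarrow> 1 \<le> l \<Longrightarrow> l \<le> n \<Longrightarrow> u \<in> Dspace \<Longrightarrow>
        (\<Sum>j\<in>{1..n}. lift (S m j) (lift (Ss l j) u)) = (if m = l then u else 0)"
    and HP_N2: "\<And>m l u. 1 \<le> m \<Longrightarrow> m \<le> n \<Longrightarrow> 1 \<le> l \<Longrightarrow> l \<le> n \<Longrightarrow> u \<in> Dspace \<Longrightarrow>
        (\<Sum>j\<in>{1..n}. lift (Ss j m) (lift (S j l) u)) = (if m = l then u else 0)"
  shows "\<exists>\<epsilon>>0. \<forall>u\<in>Dspace. \<exists>c :: nat \<Rightarrow> real.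
           (\<forall>l. 0 \<le> c l) \<and> summable (\<lambda>l. c l * \<epsilon> ^ l) \<and>
           (\<forall>xs. 1 \<le> length xs \<longrightarrow> (\<forall>x\<in>set xs. valid_label n x) \<longrightarrow>
              Hnorm (foldr (opval n E11 E10 E01 E00 E11s E10s E01s E00s F G Fs Gs S Ss) xs u)
                \<le> c (length xs) * sqrt (fact (length xs + length (filter is_K_label xs))))"
proof -
  interpret bounded_atom_cavity_coefficients n E11 E10 E01 E00 E11s E10s E01s E00s F G Fs Gs S Ss
    by unfold_locales (fact bdd_E adj_E bdd_FG adj_FG bdd_S adj_S)+
  show ?thesis
  proof (rule opval_uniformly_level_bounded)
    fix D
    assume "0 < D" and "\<forall>x. valid_label n x \<longrightarrow>
      level_bounded (opval n E11 E10 E01 E00 E11s E10s E01s E00s F G Fs Gs S Ss x) D (if is_K_label x then 2 else 1)"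
    from level_bounded_products_growth[OF this] show ?thesis
      by meson
  qed
qed

end
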